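(* Let $x,y\in\mathbb{B}^2\setminus\{0\}$ with $|x|=|y|$. (1) If $|x+y|\le \frac{4|x|^2}{1+|x|^2}$, then $$\tilde\tau_{\mathbb{B}^2}(x,y)=\log\Big(1+\sqrt{\tfrac{2|x|\,|x-y|}{1-|x|^2}}\Big).$$ (2) If $|x+y|> \frac{4|x|^2}{1+|x|^2}$, then $$\tilde\tau_{\mathbb{B}^2}(x,y)=\log\Big(1+\tfrac{|x-y|}{\sqrt{1+|x|^2-|x+y|}}\Big).$$
   Context: $\mathbb{B}^n=\{z\in\mathbb{R}^n:|z|<1\}$ is the open unit ball. For a proper subdomain $D\subsetneq\mathbb{R}^n$ with nonempty boundary $\partial D$ and $x,y\in D$, the scale invariant Cassinian metric is $$\tilde\tau_D(x,y)=\log\Big(1+\sup_{p\in\partial D}\frac{|x-y|}{\sqrt{|x-p|\,|y-p|}}\Big).$$ *)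

theory Defs
  imports "HOL-Analysis.Analysis"
begin

definition scale_inv_cassinian :: "'a::euclidean_space set \<Rightarrow> 'a \<Rightarrow> 'a \<Rightarrow> real" where
  "scale_inv_cassinian D x y =
     ln (1 + (SUP p\<in>frontier D. dist x y / sqrt (dist x p * dist y p)))"

end

theory Submission
  imports Defs
begin

text \<open>
  Put \<open>s = x + y\<close>, \<open>t = x - y\<close> and \<open>a = 1 + |x|\<^sup>2\<close>. Equal norms make \<open>s\<close> and \<open>t\<close> orthogonal
  with \<open>|s|\<^sup>2 + |t|\<^sup>2 = 4|x|\<^sup>2\<close>, and for \<open>p\<close> on the unit sphere
  \<open>(|x - p| |y - p|)\<^sup>2 = (a - \<langle>s,p\<rangle>)\<^sup>2 - \<langle>t,p\<rangle>\<^sup>2\<close>. By Bessel's inequality the pair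
  \<open>(\<langle>s,p\<rangle>, \<langle>t,p\<rangle>)\<close> ranges over the ellipse \<open>|t|\<^sup>2\<alpha>\<^sup>2 + |s|\<^sup>2\<beta>\<^sup>2 \<le> |s|\<^sup>2|t|\<^sup>2\<close>, so the supremum
  defining the metric is attained where this indefinite quadratic is minimal on the ellipse.
  If \<open>a|s| \<le> |s|\<^sup>2 + |t|\<^sup>2\<close> the minimum lies at an interior value of \<open>\<alpha>\<close> and equals
  \<open>(|t|(1 - |x|\<^sup>2) / (2|x|))\<^sup>2\<close>; otherwise it sits at the vertex \<open>p = s/|s|\<close> and equals
  \<open>(a - |s|)\<^sup>2\<close>.
\<close>

lemma ellipse_diff_squares_lower_bound:
  fixes S T a \<alpha> \<beta> :: real
  assumes "S \<ge> 0" "T \<ge> 0" "S + T > 0"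
    and ellipse: "T * \<alpha>\<^sup>2 + S * \<beta>\<^sup>2 \<le> S * T" and "\<beta>\<^sup>2 \<le> T"
  shows "T * (a\<^sup>2 - (S + T)) / (S + T) \<le> (a - \<alpha>)\<^sup>2 - \<beta>\<^sup>2"
proof (cases "S = 0")
  case True
  with assms have "T > 0" "\<alpha> = 0"
    by (auto simp: mult_le_0_iff)
  then show ?thesis
    using True \<open>\<beta>\<^sup>2 \<le> T\<close> by simp
next
  case False
  define q where "q = S + T"
  have "q > 0" "S > 0" using assms False by (auto simp: q_def)
  have "q * (S * (a - \<alpha>)\<^sup>2 - S * T + T * \<alpha>\<^sup>2) = (q * \<alpha> - a * S)\<^sup>2 + S * T * (a\<^sup>2 - q)"
    by (simp add: q_def power2_eq_square algebra_simps)
  then have "S * T * (a\<^sup>2 - q) \<le> q * (S * (a - \<alpha>)\<^sup>2 - S * T + T * \<alpha>\<^sup>2)"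
    by simp
  also have "\<dots> \<le> q * (S * ((a - \<alpha>)\<^sup>2 - \<beta>\<^sup>2))"
    using ellipse \<open>q > 0\<close> by (intro mult_left_mono) (simp_all add: algebra_simps)
  finally have "S * (T * (a\<^sup>2 - q) / q) \<le> S * ((a - \<alpha>)\<^sup>2 - \<beta>\<^sup>2)"
    using \<open>q > 0\<close> by (simp add: field_simps)
  then show ?thesis
    using \<open>S > 0\<close> unfolding q_def by (meson mult_le_cancel_left_pos)
qed

lemma ellipse_diff_squares_lower_bound_vertex:
  fixes S T a \<alpha> \<beta> :: real
  assumes "S > 0" "T \<ge> 0" "a * sqrt S > S + T" "\<alpha> \<le> sqrt S"
    and ellipse: "T * \<alpha>\<^sup>2 + S * \<beta>\<^sup>2 \<le> S * T"
  shows "(a - sqrt S)\<^sup>2 \<le> (a - \<alpha>)\<^sup>2 - \<beta>\<^sup>2"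
proof -
  define w where "w = sqrt S"
  have w: "w > 0" "w\<^sup>2 = S" using \<open>S > 0\<close> by (simp_all add: w_def)
  have factor: "S * (a - \<alpha>)\<^sup>2 - S * T + T * \<alpha>\<^sup>2 - S * (a - w)\<^sup>2
      = (w - \<alpha>) * (2 * a * S - (S + T) * (\<alpha> + w))"
    by (simp add: w(2)[symmetric] power2_eq_square algebra_simps)
  have "(S + T) * (\<alpha> + w) \<le> (S + T) * (2 * w)"
    using assms(1,2,4) by (intro mult_left_mono) (simp_all add: w_def add_nonneg_pos)
  also have "\<dots> < (a * w) * (2 * w)"
    using assms(3) w(1) by (intro mult_strict_right_mono) (simp_all add: w_def)
  also have "\<dots> = 2 * a * S"
    using w(2) by (simp add: power2_eq_square)
  finally have "0 \<le> (w - \<alpha>) * (2 * a * S - (S + T) * (\<alpha> + w))"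
    using assms(4) by (simp add: w_def)
  then have "S * (a - w)\<^sup>2 \<le> S * ((a - \<alpha>)\<^sup>2 - \<beta>\<^sup>2)"
    using factor ellipse by (simp add: algebra_simps)
  then show ?thesis
    using \<open>S > 0\<close> by (simp add: w_def)
qed

lemma orthogonal_Bessel_ineq:
  fixes s t p :: "'a::real_inner"
  assumes "inner s t = 0" "norm p = 1"
  shows "(norm t)\<^sup>2 * (inner s p)\<^sup>2 + (norm s)\<^sup>2 * (inner t p)\<^sup>2 \<le> (norm s)\<^sup>2 * (norm t)\<^sup>2"
proof (cases "s = 0 \<or> t = 0")
  case True
  then show ?thesis by auto
next
  case False
  define S T \<alpha> \<beta> where "S = (norm s)\<^sup>2" "T = (norm t)\<^sup>2" "\<alpha> = inner s p" "\<beta> = inner t p"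
  have "S * T > 0"
    using False by (simp add: S_T_\<alpha>_\<beta>_def)
  have "0 \<le> (norm ((T * \<alpha>) *\<^sub>R s + (S * \<beta>) *\<^sub>R t - (S * T) *\<^sub>R p))\<^sup>2"
    by simp
  also have "\<dots> = S * T * (S * T - T * \<alpha>\<^sup>2 - S * \<beta>\<^sup>2)"
    using assms(1) \<open>norm p = 1\<close>[unfolded norm_eq_1] unfolding S_T_\<alpha>_\<beta>_def power2_norm_eq_inner
    by (simp add: inner_commute power2_eq_square algebra_simps)
  finally have "0 \<le> S * T - T * \<alpha>\<^sup>2 - S * \<beta>\<^sup>2"
    using \<open>S * T > 0\<close> by (simp add: zero_le_mult_iff)
  then show ?thesis
    unfolding S_T_\<alpha>_\<beta>_def by simp
qed

lemma dist_mult_dist_sphere_sq: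
  fixes x y p :: "'a::real_inner"
  assumes "norm x = r" "norm y = r" "norm p = 1"
  shows "(dist x p * dist y p)\<^sup>2 = (1 + r\<^sup>2 - inner (x + y) p)\<^sup>2 - (inner (x - y) p)\<^sup>2"
proof -
  have dist_sq: "(dist z p)\<^sup>2 = 1 + r\<^sup>2 - 2 * inner z p" if "norm z = r" for z
    using dot_norm_neg[of z p] that assms(3) by (simp add: dist_norm)
  show ?thesis
    unfolding power_mult_distrib dist_sq[OF assms(1)] dist_sq[OF assms(2)]
    by (simp add: power2_eq_square algebra_simps)
qed

lemma orthogonal_sphere_diff_squares_ge_interior:
  fixes s t p :: "'a::real_inner"
  assumes "inner s t = 0" "s \<noteq> 0 \<or> t \<noteq> 0" "norm p = 1"
  shows "(norm t)\<^sup>2 * (a\<^sup>2 - ((norm s)\<^sup>2 + (norm t)\<^sup>2)) / ((norm s)\<^sup>2 + (norm t)\<^sup>2)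
           \<le> (a - inner s p)\<^sup>2 - (inner t p)\<^sup>2"
proof (rule ellipse_diff_squares_lower_bound)
  show "(inner t p)\<^sup>2 \<le> (norm t)\<^sup>2"
    using Cauchy_Schwarz_ineq2[of t p] assms(3) by (simp flip: abs_le_square_iff)
qed (use assms orthogonal_Bessel_ineq in \<open>auto simp: add_nonneg_pos add_pos_nonneg\<close>)

lemma orthogonal_sphere_diff_squares_attains_interior:
  fixes s t :: "'a::real_inner"
  assumes "inner s t = 0" "t \<noteq> 0" "\<bar>a\<bar> * norm s \<le> (norm s)\<^sup>2 + (norm t)\<^sup>2"
  obtains p where "norm p = 1"
    "(a - inner s p)\<^sup>2 - (inner t p)\<^sup>2
       = (norm t)\<^sup>2 * (a\<^sup>2 - ((norm s)\<^sup>2 + (norm t)\<^sup>2)) / ((norm s)\<^sup>2 + (norm t)\<^sup>2)"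
proof -
  define S T q where "S = (norm s)\<^sup>2" "T = (norm t)\<^sup>2" "q = (norm s)\<^sup>2 + (norm t)\<^sup>2"
  \<comment> \<open>\<open>\<kappa>\<close> makes \<open>\<alpha> = \<kappa> S\<close> the stationary point of the form on the boundary of the ellipse.\<close>
  define \<kappa> where "\<kappa> = a / q"
  define \<mu> where "\<mu> = sqrt ((1 - \<kappa>\<^sup>2 * S) / T)"
  have "T > 0" "q > 0" "q = S + T"
    using assms(2) by (auto simp: S_T_q_def add_nonneg_pos)
  have "(\<bar>a\<bar> * norm s)\<^sup>2 \<le> q\<^sup>2"
    using assms(3) by (intro power_mono) (simp_all add: S_T_q_def)
  then have "\<kappa>\<^sup>2 * S \<le> 1"
    using \<open>q > 0\<close> by (simp add: \<kappa>_def S_T_q_def power_mult_distrib power_divide divide_le_eq)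
  then have \<mu>_sq: "\<mu>\<^sup>2 * T = 1 - \<kappa>\<^sup>2 * S"
    using \<open>T > 0\<close> by (simp add: \<mu>_def)
  define p where "p = \<kappa> *\<^sub>R s + \<mu> *\<^sub>R t"
  have inner_p: "inner s p = \<kappa> * S" "inner t p = \<mu> * T"
    using assms(1) by (simp_all add: p_def S_T_q_def inner_add_right power2_norm_eq_inner inner_commute)
  have "(norm p)\<^sup>2 = \<kappa>\<^sup>2 * S + \<mu>\<^sup>2 * T"
    unfolding p_def using assms(1)
    by (subst norm_add_Pythagorean) (simp_all add: orthogonal_def S_T_q_def power_mult_distrib)
  then have "norm p = 1"
    using \<mu>_sq norm_ge_zero[of p] by (auto simp: power2_eq_1_iff)
  moreover have "(a - inner s p)\<^sup>2 - (inner t p)\<^sup>2 = T * (a\<^sup>2 - q) / q"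
  proof -
    have "(a - inner s p)\<^sup>2 - (inner t p)\<^sup>2 = (a - \<kappa> * S)\<^sup>2 - T * (1 - \<kappa>\<^sup>2 * S)"
      unfolding inner_p \<mu>_sq[symmetric] by (simp add: power2_eq_square)
    also have "\<dots> = T * (\<kappa> * a - 1)"
    proof -
      have "a = \<kappa> * (S + T)"
        using \<open>q > 0\<close> \<open>q = S + T\<close> by (simp add: \<kappa>_def)
      then show ?thesis
        by (simp add: power2_eq_square algebra_simps)
    qed
    also have "\<dots> = T * (a\<^sup>2 - q) / q"
      using \<open>q > 0\<close> by (simp add: \<kappa>_def power2_eq_square field_simps)
    finally show ?thesis .
  qed
  ultimately show ?thesis
    using that by (simp add: S_T_q_def)
qed

lemma orthogonal_sphere_diff_squares_ge_vertex:
  fixes s t p :: "'a::real_inner"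
  assumes "inner s t = 0" "a * norm s > (norm s)\<^sup>2 + (norm t)\<^sup>2" "norm p = 1"
  shows "(a - norm s)\<^sup>2 \<le> (a - inner s p)\<^sup>2 - (inner t p)\<^sup>2"
proof -
  have "s \<noteq> 0"
    using assms(2) by auto
  have "(a - sqrt ((norm s)\<^sup>2))\<^sup>2 \<le> (a - inner s p)\<^sup>2 - (inner t p)\<^sup>2"
    using assms \<open>s \<noteq> 0\<close> norm_cauchy_schwarz[of s p] orthogonal_Bessel_ineq[OF assms(1,3)]
    by (intro ellipse_diff_squares_lower_bound_vertex) auto
  then show ?thesis
    by simp
qed

lemma scale_inv_cassinian_ball_minimizer:
  fixes x y p\<^sub>0 :: "'a::euclidean_space"
  assumes "x \<in> ball c r" "y \<in> ball c r" "p\<^sub>0 \<in> sphere c r"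
    and min: "\<And>p. p \<in> sphere c r \<Longrightarrow> dist x p\<^sub>0 * dist y p\<^sub>0 \<le> dist x p * dist y p"
  shows "scale_inv_cassinian (ball c r) x y = ln (1 + dist x y / sqrt (dist x p\<^sub>0 * dist y p\<^sub>0))"
proof -
  have "r > 0"
    using le_less_trans[OF zero_le_dist assms(1)[unfolded mem_ball]] .
  have pos: "0 < dist x p * dist y p" if "p \<in> sphere c r" for p
  proof -
    have "x \<noteq> p" "y \<noteq> p"
      using assms(1,2) that by auto
    then show ?thesis
      by simp
  qed
  have "(SUP p\<in>sphere c r. dist x y / sqrt (dist x p * dist y p))
      = dist x y / sqrt (dist x p\<^sub>0 * dist y p\<^sub>0)"
  proof (rule cSup_eq_maximum)
    fix z assume "z \<in> (\<lambda>p. dist x y / sqrt (dist x p * dist y p)) ` sphere c r"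
    then obtain p where "p \<in> sphere c r" "z = dist x y / sqrt (dist x p * dist y p)"
      by blast
    then show "z \<le> dist x y / sqrt (dist x p\<^sub>0 * dist y p\<^sub>0)"
      using min pos assms(3) by (simp add: divide_left_mono)
  qed (use assms(3) in blast)
  then show ?thesis
    using \<open>r > 0\<close> by (simp add: scale_inv_cassinian_def)
qed

lemma two_mult_less_one_add_sq:
  fixes r :: real
  assumes "r \<noteq> 1"
  shows "2 * r < 1 + r\<^sup>2"
proof -
  have "0 < (1 - r)\<^sup>2"
    using assms by simp
  then show ?thesis
    by (simp add: power2_eq_square algebra_simps)
qed

lemma inner_add_diff_eq_norm_sq_diff:
  fixes x y :: "'a::real_inner"
  shows "inner (x + y) (x - y) = (norm x)\<^sup>2 - (norm y)\<^sup>2"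
  by (simp add: power2_norm_eq_inner inner_commute algebra_simps)

lemma parallelogram_law:
  fixes x y :: "'a::real_inner"
  shows "(norm (x + y))\<^sup>2 + (norm (x - y))\<^sup>2 = 2 * (norm x)\<^sup>2 + 2 * (norm y)\<^sup>2"
  by (simp add: power2_norm_eq_inner inner_commute algebra_simps)

lemma scale_inv_cassinian_unit_ball_sphere_min:
  fixes x y p\<^sub>0 :: "'a::euclidean_space"
  assumes "norm x = r" "norm y = r" "r < 1" "m \<ge> 0" "norm p\<^sub>0 = 1"
    and attained: "(1 + r\<^sup>2 - inner (x + y) p\<^sub>0)\<^sup>2 - (inner (x - y) p\<^sub>0)\<^sup>2 = m\<^sup>2"
    and bound: "\<And>p. norm p = 1 \<Longrightarrow> m\<^sup>2 \<le> (1 + r\<^sup>2 - inner (x + y) p)\<^sup>2 - (inner (x - y) p)\<^sup>2"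
  shows "scale_inv_cassinian (ball 0 1) x y = ln (1 + dist x y / sqrt m)"
proof -
  have "(dist x p\<^sub>0 * dist y p\<^sub>0)\<^sup>2 = m\<^sup>2"
    using dist_mult_dist_sphere_sq[OF assms(1,2,5)] attained by simp
  then have min_eq: "dist x p\<^sub>0 * dist y p\<^sub>0 = m"
    by (rule power2_eq_imp_eq) (use \<open>m \<ge> 0\<close> in simp_all)
  have min: "m \<le> dist x p * dist y p" if "norm p = 1" for p
  proof (rule power2_le_imp_le)
    show "m\<^sup>2 \<le> (dist x p * dist y p)\<^sup>2"
      using dist_mult_dist_sphere_sq[OF assms(1,2) that] bound[OF that] by simp
  qed simp
  show ?thesis
    unfolding min_eq[symmetric]
    by (rule scale_inv_cassinian_ball_minimizer) (use assms min min_eq in auto)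
qed

lemma scale_inv_cassinian_unit_ball_equal_norms_le:
  fixes x y :: "'a::euclidean_space"
  assumes "norm x = r" "norm y = r" "0 < r" "r < 1"
    and close: "norm (x + y) \<le> 4 * r\<^sup>2 / (1 + r\<^sup>2)"
  shows "scale_inv_cassinian (ball 0 1) x y = ln (1 + sqrt (2 * r * norm (x - y) / (1 - r\<^sup>2)))"
proof -
  define s t a where "s = x + y" "t = x - y" "a = 1 + r\<^sup>2"
  have orth: "inner s t = 0" and norms: "(norm s)\<^sup>2 + (norm t)\<^sup>2 = 4 * r\<^sup>2"
    using assms(1,2) inner_add_diff_eq_norm_sq_diff[of x y] parallelogram_law[of x y]
    by (simp_all add: s_t_a_def)
  have "a > 0" "1 - r\<^sup>2 > 0"
    using assms(3,4) by (simp_all add: s_t_a_def power_less_one_iff add_pos_nonneg)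
  have "\<bar>a\<bar> * norm s \<le> 4 * r\<^sup>2"
    using close \<open>a > 0\<close> by (simp add: s_t_a_def pos_le_divide_eq mult.commute)
  have "t \<noteq> 0"
  proof
    assume "t = 0"
    then have "(norm s)\<^sup>2 = (2 * r)\<^sup>2"
      using norms by (simp add: power_mult_distrib)
    then have "norm s = 2 * r"
      by (rule power2_eq_imp_eq[OF _ norm_ge_zero]) (use assms(3) in simp)
    with \<open>\<bar>a\<bar> * norm s \<le> 4 * r\<^sup>2\<close> \<open>a > 0\<close> have "a * (2 * r) \<le> 2 * r * (2 * r)"
      by (simp add: power2_eq_square)
    then show False
      using assms(3,4) two_mult_less_one_add_sq[of r] by (simp add: s_t_a_def)
  qed
  define m where "m = norm t * (1 - r\<^sup>2) / (2 * r)"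
  have "m \<ge> 0"
    using \<open>1 - r\<^sup>2 > 0\<close> assms(3) by (simp add: m_def)
  have form_eq: "(norm t)\<^sup>2 * (a\<^sup>2 - 4 * r\<^sup>2) / (4 * r\<^sup>2) = m\<^sup>2"
    using assms(3) by (simp add: m_def s_t_a_def power2_eq_square field_simps)
  obtain p\<^sub>0 where "norm p\<^sub>0 = 1" "(a - inner s p\<^sub>0)\<^sup>2 - (inner t p\<^sub>0)\<^sup>2 = m\<^sup>2"
    using orthogonal_sphere_diff_squares_attains_interior[OF orth \<open>t \<noteq> 0\<close>, of a, unfolded norms form_eq]
      \<open>\<bar>a\<bar> * norm s \<le> 4 * r\<^sup>2\<close> by blast
  moreover have "m\<^sup>2 \<le> (a - inner s p)\<^sup>2 - (inner t p)\<^sup>2" if "norm p = 1" for p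
    using orthogonal_sphere_diff_squares_ge_interior[OF orth _ that, of a, unfolded norms form_eq]
      \<open>t \<noteq> 0\<close> by simp
  ultimately have "scale_inv_cassinian (ball 0 1) x y = ln (1 + dist x y / sqrt m)"
    using assms(1,2,4) \<open>m \<ge> 0\<close> unfolding s_t_a_def
    by (intro scale_inv_cassinian_unit_ball_sphere_min) auto
  also have "dist x y / sqrt m = sqrt ((norm t)\<^sup>2 / m)"
    by (simp add: real_sqrt_divide s_t_a_def dist_norm)
  also have "(norm t)\<^sup>2 / m = 2 * r * norm (x - y) / (1 - r\<^sup>2)"
    using \<open>t \<noteq> 0\<close> \<open>1 - r\<^sup>2 > 0\<close> assms(3)
    by (simp add: m_def s_t_a_def power2_eq_square field_simps)
  finally show ?thesis .
qed

lemma scale_inv_cassinian_unit_ball_equal_norms_gt: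
  fixes x y :: "'a::euclidean_space"
  assumes "norm x = r" "norm y = r" "r < 1"
    and far: "norm (x + y) > 4 * r\<^sup>2 / (1 + r\<^sup>2)"
  shows "scale_inv_cassinian (ball 0 1) x y = ln (1 + norm (x - y) / sqrt (1 + r\<^sup>2 - norm (x + y)))"
proof -
  define s t a where "s = x + y" "t = x - y" "a = 1 + r\<^sup>2"
  have orth: "inner s t = 0" and norms: "(norm s)\<^sup>2 + (norm t)\<^sup>2 = 4 * r\<^sup>2"
    using assms(1,2) inner_add_diff_eq_norm_sq_diff[of x y] parallelogram_law[of x y]
    by (simp_all add: s_t_a_def)
  have "a > 0"
    by (simp add: s_t_a_def add_pos_nonneg)
  have "a * norm s > 4 * r\<^sup>2"
    using far \<open>a > 0\<close> by (simp add: s_t_a_def pos_divide_less_eq mult.commute)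
  then have "s \<noteq> 0"
    by auto
  have "norm s \<le> a"
  proof -
    have "norm s \<le> 2 * r"
      using norm_triangle_ineq[of x y] assms(1,2) by (simp add: s_t_a_def)
    then show ?thesis
      using assms(3) two_mult_less_one_add_sq[of r] by (simp add: s_t_a_def)
  qed
  have "norm (sgn s) = 1" "inner s (sgn s) = norm s" "inner t (sgn s) = 0"
    using \<open>s \<noteq> 0\<close> orth
    by (simp_all add: sgn_div_norm norm_sgn power2_norm_eq_inner[symmetric]
        power2_eq_square inner_commute)
  moreover have "(a - norm s)\<^sup>2 \<le> (a - inner s p)\<^sup>2 - (inner t p)\<^sup>2" if "norm p = 1" for p
    using orthogonal_sphere_diff_squares_ge_vertex[OF orth _ that, of a, unfolded norms]
      \<open>a * norm s > 4 * r\<^sup>2\<close> by simp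
  ultimately have "scale_inv_cassinian (ball 0 1) x y = ln (1 + dist x y / sqrt (a - norm s))"
    using assms(1,2,3) \<open>norm s \<le> a\<close> unfolding s_t_a_def
    by (intro scale_inv_cassinian_unit_ball_sphere_min[where p\<^sub>0 = "sgn (x + y)"]) auto
  then show ?thesis
    by (simp add: s_t_a_def dist_norm)
qed

theorem lemma3p2:
  fixes x y :: "real ^ 2"
  assumes "x \<in> ball 0 1" "y \<in> ball 0 1" "x \<noteq> 0" "y \<noteq> 0" "norm x = norm y"
  shows "(norm (x + y) \<le> 4 * (norm x)\<^sup>2 / (1 + (norm x)\<^sup>2) \<longrightarrow>
           scale_inv_cassinian (ball 0 1) x y
             = ln (1 + sqrt (2 * norm x * norm (x - y) / (1 - (norm x)\<^sup>2))))
         \<and> (norm (x + y) > 4 * (norm x)\<^sup>2 / (1 + (norm x)\<^sup>2) \<longrightarrow>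
           scale_inv_cassinian (ball 0 1) x y
             = ln (1 + norm (x - y) / sqrt (1 + (norm x)\<^sup>2 - norm (x + y))))"
proof -
  have "0 < norm x" "norm x < 1" "norm y = norm x"
    using assms by auto
  then show ?thesis
    using scale_inv_cassinian_unit_ball_equal_norms_le[of x "norm x" y]
      scale_inv_cassinian_unit_ball_equal_norms_gt[of x "norm x" y]
    by auto
qed

end
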